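(* Let $(\Gamma,M)$ be a three-node E-GCM graph in which every pair of distinct nodes is adjacent (a triangle) and every adjacency is odd, i.e. $m_{ij}$ is odd for all $i\ne j$. Then $(\Gamma,M)$ is not admissible.
   Context: E-GCM $M=(M_{ij})_{i,j\in I_n}$: real, $M_{ii}=2$, $M_{ij}\le0$ ($i\ne j$), $M_{ij}\ne0\iff M_{ji}\ne0$, nonzero $M_{ij}M_{ji}$ either $\ge4$ or $=4\cos^2(\pi/m)$ with $m\ge3$ integer; nodes $\gamma_i$ adjacent iff $M_{ij}\ne 0$. For $i\ne j$, $m_{ij}=k$ if $M_{ij}M_{ji}=4\cos^2(\pi/k)$ for an integer $k\ge2$, and $m_{ij}=\infty$ if $M_{ij}M_{ji}\ge4$. Positions $\lambda\in\mathbb{R}^n$; firing $\gamma_i$ (allowed iff $\lambda_i>0$) replaces $\lambda_j$ by $\lambda_j-M_{ij}\lambda_i$. Numbers game: fire nodes with positive population while any exist; a game sequence is convergent if finite. A connected E-GCM graph is admissible if some nonzero position with all $\lambda_i\ge 0$ has a convergent game sequence. *)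

theory Defs
  imports Complex_Main
begin

text \<open>Nodes are indexed by {0..<n}; a matrix is a function nat => nat => real,
  a position is a function nat => real (only entries below n matter).\<close>

definition egcm :: "nat \<Rightarrow> (nat \<Rightarrow> nat \<Rightarrow> real) \<Rightarrow> bool" where
  "egcm n M \<longleftrightarrow>
     (\<forall>i<n. M i i = 2) \<and>
     (\<forall>i<n. \<forall>j<n. i \<noteq> j \<longrightarrow> M i j \<le> 0) \<and>
     (\<forall>i<n. \<forall>j<n. M i j \<noteq> 0 \<longleftrightarrow> M j i \<noteq> 0) \<and>
     (\<forall>i<n. \<forall>j<n. i \<noteq> j \<longrightarrow> M i j * M j i \<noteq> 0 \<longrightarrow>
        (M i j * M j i \<ge> 4 \<or>
         (\<exists>m::nat. m \<ge> 3 \<and> M i j * M j i = 4 * (cos (pi / real m))\<^sup>2)))"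

definition adjacent :: "nat \<Rightarrow> (nat \<Rightarrow> nat \<Rightarrow> real) \<Rightarrow> nat \<Rightarrow> nat \<Rightarrow> bool" where
  "adjacent n M i j \<longleftrightarrow> i < n \<and> j < n \<and> i \<noteq> j \<and> M i j \<noteq> 0"

definition graph_connected :: "nat \<Rightarrow> (nat \<Rightarrow> nat \<Rightarrow> real) \<Rightarrow> bool" where
  "graph_connected n M \<longleftrightarrow> (\<forall>i<n. \<forall>j<n. (adjacent n M)\<^sup>*\<^sup>* i j)"

text \<open>m_ij is an odd integer: M_ij M_ji = 4 cos^2(pi/k) for some odd integer k >= 2
  (i.e. k >= 3); m_ij = infinity is not odd.\<close>
definition odd_bond :: "(nat \<Rightarrow> nat \<Rightarrow> real) \<Rightarrow> nat \<Rightarrow> nat \<Rightarrow> bool" where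
  "odd_bond M i j \<longleftrightarrow>
     (\<exists>k::nat. k \<ge> 2 \<and> odd k \<and> M i j * M j i = 4 * (cos (pi / real k))\<^sup>2)"

definition fire :: "nat \<Rightarrow> (nat \<Rightarrow> nat \<Rightarrow> real) \<Rightarrow> nat \<Rightarrow> (nat \<Rightarrow> real) \<Rightarrow> (nat \<Rightarrow> real)" where
  "fire n M i lam = (\<lambda>j. if j < n then lam j - M i j * lam i else lam j)"

fun legal_play :: "nat \<Rightarrow> (nat \<Rightarrow> nat \<Rightarrow> real) \<Rightarrow> (nat \<Rightarrow> real) \<Rightarrow> nat list \<Rightarrow> bool" where
  "legal_play n M lam [] = True"
| "legal_play n M lam (i # is) =
     (i < n \<and> lam i > 0 \<and> legal_play n M (fire n M i lam) is)"

fun play :: "nat \<Rightarrow> (nat \<Rightarrow> nat \<Rightarrow> real) \<Rightarrow> (nat \<Rightarrow> real) \<Rightarrow> nat list \<Rightarrow> (nat \<Rightarrow> real)" where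
  "play n M lam [] = lam"
| "play n M lam (i # is) = play n M (fire n M i lam) is"

definition convergent_game_seq ::
  "nat \<Rightarrow> (nat \<Rightarrow> nat \<Rightarrow> real) \<Rightarrow> (nat \<Rightarrow> real) \<Rightarrow> nat list \<Rightarrow> bool" where
  "convergent_game_seq n M lam s \<longleftrightarrow>
     legal_play n M lam s \<and> (\<forall>j<n. play n M lam s j \<le> 0)"

definition admissible :: "nat \<Rightarrow> (nat \<Rightarrow> nat \<Rightarrow> real) \<Rightarrow> bool" where
  "admissible n M \<longleftrightarrow> egcm n M \<and> graph_connected n M \<and>
     (\<exists>lam. (\<forall>i<n. lam i \<ge> 0) \<and> (\<exists>i<n. lam i \<noteq> 0) \<and>
            (\<exists>s. convergent_game_seq n M lam s))"

end

theory Submission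
  imports Defs
begin

text \<open>Any vector x, positive on all nodes, with Mx \<le> 0 rules out convergent games: the weight
  \<Sum>x_j \<lambda>_j never decreases when a node with positive population fires, yet it starts
  positive at a nonzero nonnegative position and ends nonpositive at a terminal one.
  For an odd triangle, take for x the cofactors of the first row of M, so that
  Mx = (det M, 0, 0). Each odd bond has 1 \<le> M_ij M_ji < 4, which makes x positive, and
  by AM-GM applied to the two cyclic products, det M \<le> 0.\<close>

definition weight :: "nat \<Rightarrow> (nat \<Rightarrow> real) \<Rightarrow> (nat \<Rightarrow> real) \<Rightarrow> real" where
  "weight n x lam = (\<Sum>j<n. x j * lam j)"

lemma weight_fire:
  assumes "i < n"
  shows "weight n x (fire n M i lam) = weight n x lam - lam i * (\<Sum>j<n. M i j * x j)"
  unfolding weight_def fire_def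
  by (simp add: algebra_simps sum_subtractf sum_distrib_left)

lemma weight_play_mono:
  assumes image_nonpos: "\<forall>i<n. (\<Sum>j<n. M i j * x j) \<le> 0"
    and "legal_play n M lam s"
  shows "weight n x lam \<le> weight n x (play n M lam s)"
  using assms(2)
proof (induction s arbitrary: lam)
  case Nil
  then show ?case by simp
next
  case (Cons i s)
  then have "i < n" "lam i > 0" and legal: "legal_play n M (fire n M i lam) s"
    by auto
  then have "weight n x lam \<le> weight n x (fire n M i lam)"
    using image_nonpos by (simp add: weight_fire mult_nonneg_nonpos)
  also have "\<dots> \<le> weight n x (play n M lam (i # s))"
    using Cons.IH[OF legal] by simp
  finally show ?case .
qed

lemma weight_pos:
  assumes "\<forall>j<n. x j > 0" "\<forall>j<n. lam j \<ge> 0" "\<exists>j<n. lam j \<noteq> 0"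
  shows "weight n x lam > 0"
proof -
  obtain k where k: "k < n" "lam k > 0"
    using assms(2,3) by (force simp: less_eq_real_def)
  have "0 < x k * lam k"
    using assms(1) k by simp
  also have "\<dots> \<le> weight n x lam"
    unfolding weight_def
    using assms(1,2) k by (intro member_le_sum) auto
  finally show ?thesis .
qed

lemma weight_nonpos:
  assumes "\<forall>j<n. x j > 0" "\<forall>j<n. lam j \<le> 0"
  shows "weight n x lam \<le> 0"
  unfolding weight_def using assms by (intro sum_nonpos) (simp add: mult_nonneg_nonpos less_imp_le)

theorem no_convergent_game_seq_if_pos_vector_nonpos_image:
  assumes "\<forall>j<n. x j > 0" "\<forall>i<n. (\<Sum>j<n. M i j * x j) \<le> 0"
    and "\<forall>j<n. lam j \<ge> 0" "\<exists>j<n. lam j \<noteq> 0"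
  shows "\<not> convergent_game_seq n M lam s"
proof
  assume "convergent_game_seq n M lam s"
  then have "legal_play n M lam s" "\<forall>j<n. play n M lam s j \<le> 0"
    unfolding convergent_game_seq_def by auto
  with assms have "weight n x lam \<le> weight n x (play n M lam s)"
    "weight n x lam > 0" "weight n x (play n M lam s) \<le> 0"
    by (simp_all add: weight_play_mono weight_pos weight_nonpos)
  then show False
    by linarith
qed

lemma cos_pi_div_bounds:
  assumes "k \<ge> 3"
  shows "1 / 2 \<le> cos (pi / real k)" "cos (pi / real k) < 1"
proof -
  have "0 < pi / real k" "pi / real k \<le> pi / 3"
    using assms by (simp, intro divide_left_mono) auto
  then show "1 / 2 \<le> cos (pi / real k)"
    using cos_monotone_0_pi_le[of "pi / real k" "pi / 3"] by (simp add: cos_60)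
  show "cos (pi / real k) < 1"
    using cos_monotone_0_pi[of 0 "pi / real k"] \<open>0 < pi / real k\<close> \<open>pi / real k \<le> pi / 3\<close>
    by simp
qed

lemma odd_bond_product_bounds:
  assumes "odd_bond M i j"
  shows "1 \<le> M i j * M j i" "M i j * M j i < 4"
proof -
  obtain k :: nat where "k \<ge> 2" "odd k" and prod: "M i j * M j i = 4 * (cos (pi / real k))\<^sup>2"
    using assms unfolding odd_bond_def by blast
  then have "k \<ge> 3"
    by (cases "k = 2") auto
  note cos_bounds = cos_pi_div_bounds[OF this]
  have "(1 / 2)\<^sup>2 \<le> (cos (pi / real k))\<^sup>2"
    using cos_bounds by (intro power_mono) auto
  then show "1 \<le> M i j * M j i"
    using prod by (simp add: power2_eq_square)
  have "(cos (pi / real k))\<^sup>2 < 1"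
    using cos_bounds by (simp add: abs_square_less_1)
  then show "M i j * M j i < 4"
    using prod by simp
qed

lemma sum_ge_2_if_prod_ge_1:
  fixes u v :: real
  assumes "u > 0" "v > 0" "u * v \<ge> 1"
  shows "u + v \<ge> 2"
proof -
  have "(u + v)\<^sup>2 = (u - v)\<^sup>2 + 4 * (u * v)"
    by (simp add: power2_eq_square algebra_simps)
  also have "\<dots> \<ge> 4"
    using assms(3) zero_le_power2[of "u - v"] by linarith
  finally show ?thesis
    using assms(1,2) power2_le_imp_le[of 2 "u + v"] by simp
qed

lemma sum_lessThan_3:
  fixes f :: "nat \<Rightarrow> 'a::comm_monoid_add"
  shows "(\<Sum>j<3. f j) = f 0 + f 1 + f 2"
  by (simp add: numeral_3_eq_3 numeral_2_eq_2 add.assoc)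

lemma all_less_3_iff:
  "(\<forall>i<3. P i) \<longleftrightarrow> P 0 \<and> P 1 \<and> P (2::nat)"
proof -
  have "i < 3 \<longleftrightarrow> i = 0 \<or> i = 1 \<or> i = 2" for i :: nat
    by auto
  then show ?thesis
    by auto
qed

lemma odd_triangle_pos_vector_nonpos_image:
  fixes M :: "nat \<Rightarrow> nat \<Rightarrow> real"
  assumes diag: "\<forall>i<3. M i i = 2"
    and neg: "\<forall>i<3. \<forall>j<3. i \<noteq> j \<longrightarrow> M i j < 0"
    and bonds: "\<forall>i<3. \<forall>j<3. i \<noteq> j \<longrightarrow> 1 \<le> M i j * M j i \<and> M i j * M j i < 4"
  obtains x :: "nat \<Rightarrow> real" where "\<forall>j<3. x j > 0" "\<forall>i<3. (\<Sum>j<3. M i j * x j) \<le> 0"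
proof
  define x where "x j = (if j = 0 then 4 - M 1 2 * M 2 1
    else if j = 1 then M 1 2 * M 2 0 - 2 * M 1 0 else M 2 1 * M 1 0 - 2 * M 2 0)" for j :: nat
  have neg_entries: "M 0 1 < 0" "M 1 0 < 0" "M 2 0 < 0" "M 0 2 < 0"
    using neg by auto
  have pos_products: "M 1 2 * M 2 0 > 0" "M 2 1 * M 1 0 > 0"
    using neg by (auto simp: mult_neg_neg)
  have "M 1 2 * M 2 1 < 4"
    using bonds by auto
  with neg_entries pos_products show "\<forall>j<3. x j > 0"
    by (simp add: x_def all_less_3_iff)
  have bond_products: "1 \<le> M 0 1 * M 1 0" "1 \<le> M 1 2 * M 2 1" "1 \<le> M 2 0 * M 0 2"
    using bonds by auto
  define u where "u = - (M 0 1 * M 1 2 * M 2 0)"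
  define v where "v = - (M 0 2 * M 2 1 * M 1 0)"
  have "u * v = (M 0 1 * M 1 0) * ((M 1 2 * M 2 1) * (M 2 0 * M 0 2))"
    unfolding u_def v_def by (simp add: algebra_simps)
  also have "\<dots> \<ge> 1 * (1 * 1)"
    using bond_products by (intro mult_mono) linarith+
  finally have "u + v \<ge> 2"
    using neg_entries pos_products
    by (intro sum_ge_2_if_prod_ge_1) (auto simp: u_def v_def mult.assoc mult_neg_pos)
  have "(\<Sum>j<3. M 0 j * x j)
      = 8 - 2 * (M 0 1 * M 1 0) - 2 * (M 1 2 * M 2 1) - 2 * (M 2 0 * M 0 2) - (u + v)"
    "(\<Sum>j<3. M 1 j * x j) = 0" "(\<Sum>j<3. M 2 j * x j) = 0"
    using diag by (simp_all add: sum_lessThan_3 x_def u_def v_def algebra_simps)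
  then show "\<forall>i<3. (\<Sum>j<3. M i j * x j) \<le> 0"
    using \<open>u + v \<ge> 2\<close> bond_products by (simp add: all_less_3_iff)
qed

theorem lemma4p15:
  fixes M :: "nat \<Rightarrow> nat \<Rightarrow> real"
  assumes "egcm 3 M"
    and "\<forall>i<3. \<forall>j<3. i \<noteq> j \<longrightarrow> adjacent 3 M i j"
    and "\<forall>i<3. \<forall>j<3. i \<noteq> j \<longrightarrow> odd_bond M i j"
  shows "\<not> admissible 3 M"
proof
  assume "admissible 3 M"
  then obtain lam s where "\<forall>i<3. lam i \<ge> 0" "\<exists>i<3. lam i \<noteq> 0"
    and convergent: "convergent_game_seq 3 M lam s"
    unfolding admissible_def by blast
  have "\<forall>i<3. M i i = 2" "\<forall>i<3. \<forall>j<3. i \<noteq> j \<longrightarrow> M i j < 0"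
    using assms(1,2) unfolding egcm_def adjacent_def by (auto simp: less_le)
  moreover have "\<forall>i<3. \<forall>j<3. i \<noteq> j \<longrightarrow> 1 \<le> M i j * M j i \<and> M i j * M j i < 4"
    using assms(3) odd_bond_product_bounds by blast
  ultimately obtain x where "\<forall>j<3. x j > 0" "\<forall>i<3. (\<Sum>j<3. M i j * x j) \<le> 0"
    by (rule odd_triangle_pos_vector_nonpos_image)
  with convergent show False
    using no_convergent_game_seq_if_pos_vector_nonpos_image
      \<open>\<forall>i<3. lam i \<ge> 0\<close> \<open>\<exists>i<3. lam i \<noteq> 0\<close> by blast
qed

end
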